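(* Fix a prime power $q$ and real numbers $0\le\rho'\le r'\le 1/2$ with $r'>0$. Define $$k_{\mathrm{C}}(r',\rho') = \liminf_{n\to\infty}\frac{\log_q K_{\mathrm{C}}(q,n,\lfloor r'n\rfloor,\lfloor\rho'n\rfloor)}{\log_q{n\brack \lfloor r'n\rfloor}}.$$ Then $k_{\mathrm{C}}(r',\rho') = 1 - \frac{\rho'(1-\rho')}{r'(1-r')}$.
   Context: ${m\brack k}=\prod_{i=0}^{k-1}\frac{q^m-q^i}{q^k-q^i}$ is the Gaussian binomial. $E_r(q,n)$ is the set of $r$-dimensional subspaces of $\mathrm{GF}(q)^n$ with injection distance $d_{\mathrm{I}}(U,V)=\dim(U+V)-\min\{\dim U,\dim V\}$; the covering radius of a nonempty $\mathcal{C}\subseteq E_r(q,n)$ is $\max_U\min_{C\in\mathcal{C}}d_{\mathrm{I}}(U,C)$, and $K_{\mathrm{C}}(q,n,r,\rho)$ is the minimum cardinality of a subset of $E_r(q,n)$ with covering radius at most $\rho$. *)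

theory Defs
  imports "HOL-Analysis.Analysis" "HOL-Library.Liminf_Limsup" "HOL-Library.Function_Algebras"
begin

text \<open>Vectors of GF(q)^n are modelled as functions nat => 'a vanishing from index n on,
  where 'a is a finite field (of order q = CARD('a)).\<close>

definition fscale :: "'a::field \<Rightarrow> (nat \<Rightarrow> 'a) \<Rightarrow> (nat \<Rightarrow> 'a)" where
  "fscale c v = (\<lambda>i. c * v i)"

definition Vn :: "nat \<Rightarrow> (nat \<Rightarrow> 'a::field) set" where
  "Vn n = {v. \<forall>i\<ge>n. v i = 0}"

definition sdim :: "(nat \<Rightarrow> 'a::field) set \<Rightarrow> nat" where
  "sdim U = vector_space.dim fscale U"

definition Er :: "nat \<Rightarrow> nat \<Rightarrow> (nat \<Rightarrow> 'a::{field,finite}) set set" where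
  "Er n r = {U. module.subspace fscale U \<and> U \<subseteq> Vn n \<and> sdim U = r}"

definition dI :: "(nat \<Rightarrow> 'a::field) set \<Rightarrow> (nat \<Rightarrow> 'a) set \<Rightarrow> nat" where
  "dI U V = sdim (module.span fscale (U \<union> V)) - min (sdim U) (sdim V)"

definition covrad :: "nat \<Rightarrow> nat \<Rightarrow> (nat \<Rightarrow> 'a::{field,finite}) set set \<Rightarrow> nat" where
  "covrad n r Cs = Max ((\<lambda>U. Min ((\<lambda>C. dI U C) ` Cs)) ` Er n r)"

definition KC :: "'a::{field,finite} itself \<Rightarrow> nat \<Rightarrow> nat \<Rightarrow> nat \<Rightarrow> nat" where
  "KC _ n r \<rho> = (LEAST m. \<exists>Cs::(nat \<Rightarrow> 'a) set set.
      Cs \<subseteq> Er n r \<and> Cs \<noteq> {} \<and> covrad n r Cs \<le> \<rho> \<and> card Cs = m)"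

definition gauss_binom :: "nat \<Rightarrow> nat \<Rightarrow> nat \<Rightarrow> real" where
  "gauss_binom q m k = (\<Prod>i<k. (real q ^ m - real q ^ i) / (real q ^ k - real q ^ i))"

end

theory Submission
  imports Defs
begin

text \<open>
  Let \<open>G = |E_r(q,n)|\<close>, the Gaussian binomial. Every covering code of radius \<open>\<rho>\<close> has at least
  \<open>G / B\<^sub>m\<^sub>a\<^sub>x\<close> elements, where \<open>B\<^sub>m\<^sub>a\<^sub>x\<close> is the largest ball, and the greedy
  algorithm produces one with at most \<open>G / B\<^sub>m\<^sub>i\<^sub>n \<cdot> (1 + ln G)\<close> elements. Counting ordered
  independent lists shows \<open>log\<^sub>q G = r(n - r) + O(n)\<close> and, for \<open>\<rho> \<le> r\<close> and
  \<open>r + \<rho> \<le> n\<close>, that every ball has \<open>log\<^sub>q\<close>-size \<open>\<rho>(n - \<rho>) + O(n)\<close>: a ball lies in the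
  union of the Grassmannians of the \<open>(r + \<rho>)\<close>-spaces through the centre \<open>U\<close>, and it contains,
  for each \<open>(r - \<rho>)\<close>-subspace \<open>W\<close> of \<open>U\<close>, the many spaces meeting \<open>U\<close> exactly in \<open>W\<close>.
  Hence \<open>log\<^sub>q K\<^sub>C = r(n - r) - \<rho>(n - \<rho>) + O(n)\<close>, and after dividing by \<open>n\<^sup>2\<close> with
  \<open>r = \<lfloor>r'n\<rfloor>\<close>, \<open>\<rho> = \<lfloor>\<rho>'n\<rfloor>\<close> the ratio of the two logarithms actually converges.
\<close>

interpretation lin: vector_space "fscale :: 'a::field \<Rightarrow> (nat \<Rightarrow> 'a) \<Rightarrow> (nat \<Rightarrow> 'a)"
  by unfold_locales (auto simp: fscale_def fun_eq_iff algebra_simps)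

lemma sdim_eq_dim: "sdim U = lin.dim U"
  by (simp add: sdim_def)

lemma card_field_ge_2: "2 \<le> CARD('a::{field,finite})"
proof -
  have "card {0::'a, 1} \<le> CARD('a)" by (rule card_mono) auto
  then show ?thesis by simp
qed

lemma inj_on_lincomb_independent:
  fixes B :: "(nat \<Rightarrow> 'a::field) set"
  assumes fin: "finite B" and ind: "lin.independent B"
  shows "inj_on (\<lambda>c. \<Sum>b\<in>B. fscale (c b) b) (PiE B (\<lambda>_. UNIV))"
proof (rule inj_onI)
  fix c d assume c: "c \<in> PiE B (\<lambda>_. UNIV)" and d: "d \<in> PiE B (\<lambda>_. UNIV)"
    and eq: "(\<Sum>b\<in>B. fscale (c b) b) = (\<Sum>b\<in>B. fscale (d b) b)"
  have "(\<Sum>b\<in>B. fscale (c b - d b) b) = (\<Sum>b\<in>B. fscale (c b) b) - (\<Sum>b\<in>B. fscale (d b) b)"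
    by (simp add: lin.scale_left_diff_distrib sum_subtractf)
  then have zero: "(\<Sum>b\<in>B. fscale (c b - d b) b) = 0"
    using eq by simp
  show "c = d"
  proof
    fix x show "c x = d x"
    proof (cases "x \<in> B")
      case True
      then show ?thesis
        using lin.independentD[OF ind fin subset_refl zero] by simp
    next
      case False
      then show ?thesis
        using c d by (auto simp: PiE_def extensional_def)
    qed
  qed
qed

lemma lincomb_image_eq_span:
  fixes B :: "(nat \<Rightarrow> 'a::field) set"
  assumes fin: "finite B"
  shows "(\<lambda>c. \<Sum>b\<in>B. fscale (c b) b) ` PiE B (\<lambda>_. UNIV) = lin.span B"
proof
  show "(\<lambda>c. \<Sum>b\<in>B. fscale (c b) b) ` PiE B (\<lambda>_. UNIV) \<subseteq> lin.span B"
  proof (rule image_subsetI)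
    fix c show "(\<Sum>b\<in>B. fscale (c b) b) \<in> lin.span B"
      by (rule lin.span_sum, rule lin.span_scale, erule lin.span_base)
  qed
  show "lin.span B \<subseteq> (\<lambda>c. \<Sum>b\<in>B. fscale (c b) b) ` PiE B (\<lambda>_. UNIV)"
  proof
    fix x assume "x \<in> lin.span B"
    then obtain u where u: "x = (\<Sum>b\<in>B. fscale (u b) b)"
      using lin.span_finite[OF fin] by auto
    have "x = (\<Sum>b\<in>B. fscale (restrict u B b) b)"
      using u by (auto intro!: sum.cong)
    moreover have "restrict u B \<in> PiE B (\<lambda>_. UNIV)"
      by simp
    ultimately show "x \<in> (\<lambda>c. \<Sum>b\<in>B. fscale (c b) b) ` PiE B (\<lambda>_. UNIV)"
      by (rule image_eqI)
  qed
qed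

lemma card_span_independent:
  fixes B :: "(nat \<Rightarrow> 'a::{field,finite}) set"
  assumes "finite B" and "lin.independent B"
  shows "card (lin.span B) = CARD('a) ^ card B"
  using card_image[OF inj_on_lincomb_independent[OF assms]] lincomb_image_eq_span[OF assms(1)] assms(1)
  by (simp add: card_PiE)

lemma subspace_Vn: "lin.subspace (Vn n)"
  by (auto simp: Vn_def lin.subspace_def fscale_def)

lemma Vn_eq_image_PiE:
  "Vn n = (\<lambda>f i. if i < n then f i else 0) ` PiE {..<n} (\<lambda>_. UNIV)" (is "_ = ?ext ` ?P")
proof
  show "?ext ` ?P \<subseteq> Vn n"
    unfolding Vn_def by (simp add: image_subset_iff)
  show "Vn n \<subseteq> ?ext ` ?P"
  proof
    fix v :: "nat \<Rightarrow> 'a" assume "v \<in> Vn n"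
    then have "v = ?ext (restrict v {..<n})"
      by (auto simp: Vn_def fun_eq_iff)
    moreover have "restrict v {..<n} \<in> ?P"
      by simp
    ultimately show "v \<in> ?ext ` ?P"
      by (rule image_eqI)
  qed
qed

lemma finite_Vn: "finite (Vn n :: (nat \<Rightarrow> 'a::{field,finite}) set)"
  by (simp add: Vn_eq_image_PiE finite_PiE)

lemma card_Vn: "card (Vn n :: (nat \<Rightarrow> 'a::{field,finite}) set) = CARD('a) ^ n"
proof -
  have "inj_on (\<lambda>f i. if i < n then f i else (0::'a)) (PiE {..<n} (\<lambda>_. UNIV))"
  proof (rule inj_onI)
    fix f g :: "nat \<Rightarrow> 'a"
    assume f: "f \<in> PiE {..<n} (\<lambda>_. UNIV)" and g: "g \<in> PiE {..<n} (\<lambda>_. UNIV)"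
      and eq: "(\<lambda>i. if i < n then f i else 0) = (\<lambda>i. if i < n then g i else 0)"
    show "f = g"
    proof
      fix i show "f i = g i"
        using fun_cong[OF eq, of i] PiE_arb[OF f, of i] PiE_arb[OF g, of i]
        by (cases "i < n") simp_all
    qed
  qed
  then show ?thesis
    by (simp add: Vn_eq_image_PiE card_image card_PiE)
qed

lemma finite_if_subset_Vn: "U \<subseteq> Vn n \<Longrightarrow> finite (U :: (nat \<Rightarrow> 'a::{field,finite}) set)"
  using finite_Vn finite_subset by blast

lemma card_subspace:
  fixes U :: "(nat \<Rightarrow> 'a::{field,finite}) set"
  assumes "lin.subspace U" "finite U"
  shows "card U = CARD('a) ^ lin.dim U"
proof -
  obtain B where B: "B \<subseteq> U" "lin.independent B" "U \<subseteq> lin.span B" "card B = lin.dim U"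
    using lin.basis_exists by blast
  then have "lin.span B = U"
    using assms lin.span_minimal[of B U] by auto
  moreover have "finite B"
    using B assms finite_subset by auto
  ultimately show ?thesis
    using card_span_independent B by metis
qed

lemma subspace_obtain_basis:
  fixes U :: "(nat \<Rightarrow> 'a::{field,finite}) set"
  assumes "lin.subspace U" "finite U"
  obtains B where "B \<subseteq> U" "lin.independent B" "lin.span B = U" "card B = lin.dim U" "finite B"
proof -
  obtain B where B: "B \<subseteq> U" "lin.independent B" "U \<subseteq> lin.span B" "card B = lin.dim U"
    using lin.basis_exists by blast
  then have "lin.span B = U"
    using assms lin.span_minimal[of B U] by auto
  then show ?thesis
    using that B assms finite_subset by blast
qed

lemma span_eq_if_card_eq_dim:
  fixes U :: "(nat \<Rightarrow> 'a::{field,finite}) set"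
  assumes "lin.subspace U" "finite U" "B \<subseteq> U" "lin.independent B" "card B = lin.dim U"
  shows "lin.span B = U"
proof -
  have "finite B"
    using assms finite_subset by auto
  then have "card (lin.span B) = card U"
    using card_span_independent card_subspace assms by metis
  moreover have "lin.span B \<subseteq> U"
    using assms lin.span_minimal by auto
  ultimately show ?thesis
    using card_subset_eq[OF assms(2)] by blast
qed

text \<open>Addition maps \<open>span A \<times> span B\<close> onto \<open>span (A \<union> B)\<close> and both sets have
  \<open>q ^ (card A + card B)\<close> elements, so addition is injective on it.\<close>
lemma span_Int_span_eq_zero:
  fixes A :: "(nat \<Rightarrow> 'a::{field,finite}) set"
  assumes fin: "finite A" "finite B" and ind: "lin.independent (A \<union> B)" and disj: "A \<inter> B = {}"
    and x: "x \<in> lin.span A" "x \<in> lin.span B"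
  shows "x = 0"
proof -
  let ?add = "\<lambda>(a, b). a + b"
  have indAB: "lin.independent A" "lin.independent B"
    using ind lin.independent_mono by auto
  have "finite (lin.span A \<times> lin.span B)"
    using card_span_independent[OF fin(1) indAB(1)] card_span_independent[OF fin(2) indAB(2)]
      card_ge_0_finite[of "lin.span A"] card_ge_0_finite[of "lin.span B"]
    by simp
  moreover have "card (?add ` (lin.span A \<times> lin.span B)) = card (lin.span A \<times> lin.span B)"
  proof -
    have "?add ` (lin.span A \<times> lin.span B) = lin.span (A \<union> B)"
      by (auto simp: lin.span_Un)
    moreover have "card (lin.span (A \<union> B)) = card (lin.span A \<times> lin.span B)"
      using card_span_independent[OF _ ind] card_span_independent[OF fin(1) indAB(1)]
        card_span_independent[OF fin(2) indAB(2)] card_Un_disjoint[OF fin disj] fin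
      by (simp add: card_cartesian_product power_add)
    ultimately show ?thesis by simp
  qed
  ultimately have "inj_on ?add (lin.span A \<times> lin.span B)"
    by (rule eq_card_imp_inj_on)
  moreover have "(x, 0) \<in> lin.span A \<times> lin.span B" "(0, x) \<in> lin.span A \<times> lin.span B"
    using x lin.span_zero by auto
  moreover have "?add (x, 0) = ?add (0, x)"
    by simp
  ultimately have "(x, 0) = (0, x)"
    by (meson inj_onD)
  then show ?thesis by simp
qed

lemma span_Un_Int_span_Un:
  fixes A :: "(nat \<Rightarrow> 'a::{field,finite}) set"
  assumes fin: "finite (A \<union> B \<union> C)" and ind: "lin.independent (A \<union> B \<union> C)"
    and disj: "(A \<union> B) \<inter> C = {}"
  shows "lin.span (A \<union> C) \<inter> lin.span (A \<union> B) = lin.span A"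
proof
  show "lin.span A \<subseteq> lin.span (A \<union> C) \<inter> lin.span (A \<union> B)"
    by (simp add: lin.span_mono)
  show "lin.span (A \<union> C) \<inter> lin.span (A \<union> B) \<subseteq> lin.span A"
  proof
    fix x assume x: "x \<in> lin.span (A \<union> C) \<inter> lin.span (A \<union> B)"
    then obtain a c where ac: "x = a + c" "a \<in> lin.span A" "c \<in> lin.span C"
      by (auto simp: lin.span_Un)
    have "c = x - a"
      using ac by simp
    then have "c \<in> lin.span (A \<union> B)"
      using x ac lin.span_mono[of A "A \<union> B"] lin.span_diff by blast
    then have "c = 0"
      using span_Int_span_eq_zero[of "A \<union> B" C] fin ind disj ac(3) by auto
    then show "x \<in> lin.span A"
      using ac by simp
  qed
qed

definition independent_extensions ::
    "(nat \<Rightarrow> 'a::field) set \<Rightarrow> (nat \<Rightarrow> 'a) set \<Rightarrow> nat \<Rightarrow> (nat \<Rightarrow> 'a) list set" where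
  "independent_extensions X S k = {vs. length vs = k \<and> distinct vs \<and> set vs \<subseteq> X \<and>
     set vs \<inter> S = {} \<and> lin.independent (S \<union> set vs)}"

definition qfall_prod :: "nat \<Rightarrow> nat \<Rightarrow> nat \<Rightarrow> nat \<Rightarrow> real" where
  "qfall_prod q m s k = (\<Prod>i<k. real q ^ m - real q ^ (s + i))"

definition intermediate_subspaces ::
    "(nat \<Rightarrow> 'a::field) set \<Rightarrow> (nat \<Rightarrow> 'a) set \<Rightarrow> nat \<Rightarrow> (nat \<Rightarrow> 'a) set set" where
  "intermediate_subspaces X S r = {U. lin.subspace U \<and> S \<subseteq> U \<and> U \<subseteq> X \<and> lin.dim U = r}"

lemma independent_extensionsD:
  assumes "vs \<in> independent_extensions X S k" "finite S"
  shows "card (S \<union> set vs) = card S + k" "lin.independent (S \<union> set vs)" "set vs \<subseteq> X"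
  using assms by (auto simp: independent_extensions_def card_Un_disjoint distinct_card inf_commute)

lemma independent_extensions_mono:
  "X \<subseteq> Y \<Longrightarrow> independent_extensions X S k \<subseteq> independent_extensions Y S k"
  by (auto simp: independent_extensions_def)

lemma finite_independent_extensions:
  "finite X \<Longrightarrow> finite (independent_extensions X S k)"
  by (rule finite_subset[OF _ finite_lists_length_eq[of X k]]) (auto simp: independent_extensions_def)

lemma independent_extensions_Suc:
  "independent_extensions X S (Suc k) =
     (\<lambda>(vs, v). v # vs) ` (SIGMA vs:independent_extensions X S k. X - lin.span (S \<union> set vs))"
proof
  show "independent_extensions X S (Suc k) \<subseteq>
      (\<lambda>(vs, v). v # vs) ` (SIGMA vs:independent_extensions X S k. X - lin.span (S \<union> set vs))"
  proof
    fix ws assume ws: "ws \<in> independent_extensions X S (Suc k)"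
    then obtain v vs where ws_eq: "ws = v # vs"
      by (cases ws) (auto simp: independent_extensions_def)
    have ind: "lin.independent (insert v (S \<union> set vs))" and v: "v \<notin> S \<union> set vs"
      using ws ws_eq by (auto simp: independent_extensions_def)
    have "vs \<in> independent_extensions X S k"
      using ws ws_eq lin.independent_mono[OF ind] by (auto simp: independent_extensions_def)
    moreover have "v \<in> X - lin.span (S \<union> set vs)"
      using ws ws_eq ind v lin.independent_insert[of v "S \<union> set vs"]
      by (auto simp: independent_extensions_def)
    ultimately show "ws \<in> (\<lambda>(vs, v). v # vs) `
        (SIGMA vs:independent_extensions X S k. X - lin.span (S \<union> set vs))"
      using ws_eq by force
  qed
  show "(\<lambda>(vs, v). v # vs) ` (SIGMA vs:independent_extensions X S k. X - lin.span (S \<union> set vs))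
      \<subseteq> independent_extensions X S (Suc k)"
  proof clarify
    fix vs v assume vs: "vs \<in> independent_extensions X S k"
      and v: "v \<in> X" "v \<notin> lin.span (S \<union> set vs)"
    have "v \<notin> S \<union> set vs"
      using v lin.span_superset by blast
    moreover have "lin.independent (insert v (S \<union> set vs))"
      using lin.independent_insertI[OF v(2)] vs by (auto simp: independent_extensions_def)
    ultimately show "v # vs \<in> independent_extensions X S (Suc k)"
      using vs v by (auto simp: independent_extensions_def)
  qed
qed

lemma card_Diff_span_independent:
  fixes X :: "(nat \<Rightarrow> 'a::{field,finite}) set"
  assumes X: "lin.subspace X" "finite X" "card X = CARD('a) ^ m"
    and B: "B \<subseteq> X" "lin.independent B"
  shows "real (card (X - lin.span B)) = real CARD('a) ^ m - real CARD('a) ^ card B"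
proof -
  have sub: "lin.span B \<subseteq> X"
    using B X lin.span_minimal by blast
  have "finite B"
    using B X finite_subset by blast
  then have "card (lin.span B) = CARD('a) ^ card B"
    using card_span_independent B by blast
  moreover have "card (X - lin.span B) = card X - card (lin.span B)"
    using card_Diff_subset[OF finite_subset[OF sub X(2)] sub] .
  moreover have "card (lin.span B) \<le> card X"
    using card_mono[OF X(2) sub] .
  ultimately show ?thesis
    using X(3) by (simp add: of_nat_diff)
qed

lemma card_independent_extensions:
  fixes X :: "(nat \<Rightarrow> 'a::{field,finite}) set"
  assumes X: "lin.subspace X" "finite X" "card X = CARD('a) ^ m"
    and S: "S \<subseteq> X" "lin.independent S" and k: "card S + k \<le> m"
  shows "real (card (independent_extensions X S k)) = qfall_prod CARD('a) m (card S) k"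
  using k
proof (induction k)
  case 0
  have "independent_extensions X S 0 = {[]}"
    using S by (auto simp: independent_extensions_def)
  then show ?case
    by (simp add: qfall_prod_def)
next
  case (Suc k)
  let ?q = "real CARD('a)"
  have fin_S: "finite S"
    using S X finite_subset by auto
  have complement: "real (card (X - lin.span (S \<union> set vs))) = ?q ^ m - ?q ^ (card S + k)"
    if vs: "vs \<in> independent_extensions X S k" for vs
    using card_Diff_span_independent[OF X, of "S \<union> set vs"] independent_extensionsD[OF vs fin_S] S
    by auto
  have "inj_on (\<lambda>(vs, v). v # vs) (SIGMA vs:independent_extensions X S k. X - lin.span (S \<union> set vs))"
    by (auto simp: inj_on_def)
  then have "card (independent_extensions X S (Suc k)) =
      card (SIGMA vs:independent_extensions X S k. X - lin.span (S \<union> set vs))"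
    unfolding independent_extensions_Suc by (rule card_image)
  also have "\<dots> = (\<Sum>vs\<in>independent_extensions X S k. card (X - lin.span (S \<union> set vs)))"
    using finite_independent_extensions X(2) by (intro card_SigmaI) auto
  finally have "real (card (independent_extensions X S (Suc k))) =
      (\<Sum>vs\<in>independent_extensions X S k. real (card (X - lin.span (S \<union> set vs))))"
    by simp
  also have "\<dots> = real (card (independent_extensions X S k)) * (?q ^ m - ?q ^ (card S + k))"
    using complement by simp
  also have "\<dots> = qfall_prod CARD('a) m (card S) (Suc k)"
    using Suc by (simp add: qfall_prod_def)
  finally show ?case .
qed

lemma qfall_prod_bounds:
  assumes q: "2 \<le> q" and k: "s + k \<le> m"
  shows "real q ^ ((m - 1) * k) \<le> qfall_prod q m s k" "qfall_prod q m s k \<le> real q ^ (m * k)"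
    "0 < qfall_prod q m s k"
proof -
  have factor: "real q ^ (m - 1) \<le> real q ^ m - real q ^ (s + i)" if "i < k" for i
  proof -
    have "real q ^ (s + i) \<le> real q ^ (m - 1)"
      using that k q by (intro power_increasing) auto
    moreover have "real q ^ m = real q * real q ^ (m - 1)"
      using that k by (cases m) auto
    moreover have "2 * real q ^ (m - 1) \<le> real q * real q ^ (m - 1)"
      using q by (intro mult_right_mono) auto
    ultimately show ?thesis by linarith
  qed
  have "(\<Prod>i<k. real q ^ (m - 1)) \<le> qfall_prod q m s k"
    unfolding qfall_prod_def by (rule prod_mono) (use factor in simp)
  then show lower: "real q ^ ((m - 1) * k) \<le> qfall_prod q m s k"
    by (simp add: power_mult)
  have "qfall_prod q m s k \<le> (\<Prod>i<k. real q ^ m)"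
    unfolding qfall_prod_def
  proof (rule prod_mono)
    fix i assume "i \<in> {..<k}"
    then have "real q ^ (s + i) \<le> real q ^ m"
      using k q by (intro power_increasing) auto
    then show "0 \<le> real q ^ m - real q ^ (s + i) \<and> real q ^ m - real q ^ (s + i) \<le> real q ^ m"
      by simp
  qed
  then show "qfall_prod q m s k \<le> real q ^ (m * k)"
    by (simp add: power_mult)
  have "0 < real q ^ ((m - 1) * k)"
    using q by simp
  then show "0 < qfall_prod q m s k"
    using lower by linarith
qed

lemma independent_extensions_nonempty:
  fixes X :: "(nat \<Rightarrow> 'a::{field,finite}) set"
  assumes X: "lin.subspace X" "finite X" "card X = CARD('a) ^ m"
    and S: "S \<subseteq> X" "lin.independent S" and k: "card S + k \<le> m"
  shows "independent_extensions X S k \<noteq> {}"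
  using card_independent_extensions[OF X S k] qfall_prod_bounds(3)[OF card_field_ge_2[where 'a='a] k] by auto

lemma subspace_extend_dim:
  fixes Y :: "(nat \<Rightarrow> 'a::{field,finite}) set"
  assumes Y: "lin.subspace Y" "Y \<subseteq> Vn n" and d: "lin.dim Y \<le> d" "d \<le> n"
  obtains X where "lin.subspace X" "Y \<subseteq> X" "X \<subseteq> Vn n" "lin.dim X = d"
proof -
  obtain B where B: "B \<subseteq> Y" "lin.independent B" "lin.span B = Y" "card B = lin.dim Y" "finite B"
    using subspace_obtain_basis[OF Y(1) finite_if_subset_Vn[OF Y(2)]] by blast
  obtain vs where vs: "vs \<in> independent_extensions (Vn n) B (d - lin.dim Y)"
    using independent_extensions_nonempty[of "Vn n" n B "d - lin.dim Y", OF subspace_Vn finite_Vn card_Vn]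
      B Y d by auto
  let ?X = "lin.span (B \<union> set vs)"
  have "Y \<subseteq> ?X"
    using B lin.span_mono[of B "B \<union> set vs"] by auto
  moreover have "?X \<subseteq> Vn n"
    using vs B Y by (intro lin.span_minimal[OF _ subspace_Vn]) (auto simp: independent_extensions_def)
  moreover have "lin.dim ?X = d"
    using lin.dim_span_eq_card_independent[OF independent_extensionsD(2)[OF vs B(5)]]
      independent_extensionsD(1)[OF vs B(5)] B d by simp
  ultimately show ?thesis
    using that lin.subspace_span by blast
qed

lemma finite_intermediate_subspaces:
  "finite X \<Longrightarrow> finite (intermediate_subspaces X S r)"
  by (rule finite_subset[of _ "Pow X"]) (auto simp: intermediate_subspaces_def)

lemma intermediate_subspacesD:
  fixes U :: "(nat \<Rightarrow> 'a::{field,finite}) set"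
  assumes "U \<in> intermediate_subspaces X S r" "finite X"
  shows "lin.subspace U" "S \<subseteq> U" "U \<subseteq> X" "lin.dim U = r" "finite U" "card U = CARD('a) ^ r"
proof -
  show U: "lin.subspace U" "S \<subseteq> U" "U \<subseteq> X" "lin.dim U = r"
    using assms(1) by (auto simp: intermediate_subspaces_def)
  show "finite U"
    using U(3) assms(2) finite_subset by blast
  then show "card U = CARD('a) ^ r"
    using card_subspace U by metis
qed

lemma span_eq_if_independent_extension:
  fixes U :: "(nat \<Rightarrow> 'a::{field,finite}) set"
  assumes U: "U \<in> intermediate_subspaces X S r" "finite X"
    and vs: "vs \<in> independent_extensions U S (r - card S)"
    and S: "finite S" "card S \<le> r"
  shows "lin.span (S \<union> set vs) = U"
  using span_eq_if_card_eq_dim[of U "S \<union> set vs"] intermediate_subspacesD[OF U]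
    independent_extensionsD[OF vs S(1)] S(2)
  by auto

lemma independent_extensions_eq_UN:
  fixes X :: "(nat \<Rightarrow> 'a::{field,finite}) set"
  assumes X: "lin.subspace X" and S: "S \<subseteq> X" "finite S" "card S \<le> r"
  shows "independent_extensions X S (r - card S) =
    (\<Union>U\<in>intermediate_subspaces X S r. independent_extensions U S (r - card S))"
proof
  show "independent_extensions X S (r - card S) \<subseteq>
      (\<Union>U\<in>intermediate_subspaces X S r. independent_extensions U S (r - card S))"
  proof
    fix vs assume vs: "vs \<in> independent_extensions X S (r - card S)"
    let ?U = "lin.span (S \<union> set vs)"
    have "S \<union> set vs \<subseteq> X"
      using vs S(1) by (auto simp: independent_extensions_def)
    then have "?U \<subseteq> X"
      using lin.span_minimal[OF _ X] by blast
    moreover have "lin.dim ?U = r"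
      using lin.dim_span_eq_card_independent[OF independent_extensionsD(2)[OF vs S(2)]]
        independent_extensionsD(1)[OF vs S(2)] S(3) by simp
    ultimately have "?U \<in> intermediate_subspaces X S r"
      using lin.span_superset[of "S \<union> set vs"] by (auto simp: intermediate_subspaces_def)
    moreover have "vs \<in> independent_extensions ?U S (r - card S)"
      using vs lin.span_superset[of "S \<union> set vs"] by (auto simp: independent_extensions_def)
    ultimately show "vs \<in> (\<Union>U\<in>intermediate_subspaces X S r. independent_extensions U S (r - card S))"
      by blast
  qed
  show "(\<Union>U\<in>intermediate_subspaces X S r. independent_extensions U S (r - card S)) \<subseteq>
      independent_extensions X S (r - card S)"
    by (auto simp: intermediate_subspaces_def dest: independent_extensions_mono[THEN subsetD, rotated])
qed

text \<open>Double counting of the ordered extensions of \<open>S\<close> to a basis of an \<open>r\<close>-dimensional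
  subspace between \<open>S\<close> and \<open>X\<close>.\<close>
lemma card_intermediate_subspaces:
  fixes X :: "(nat \<Rightarrow> 'a::{field,finite}) set"
  assumes X: "lin.subspace X" "finite X" "card X = CARD('a) ^ m"
    and S: "S \<subseteq> X" "lin.independent S" and r: "card S \<le> r" "r \<le> m"
  shows "real (card (intermediate_subspaces X S r)) * qfall_prod CARD('a) r (card S) (r - card S) =
    qfall_prod CARD('a) m (card S) (r - card S)"
proof -
  let ?k = "r - card S" and ?Us = "intermediate_subspaces X S r"
  have fin_S: "finite S"
    using S X finite_subset by auto
  have "card (independent_extensions X S ?k) = (\<Sum>U\<in>?Us. card (independent_extensions U S ?k))"
    unfolding independent_extensions_eq_UN[OF X(1) S(1) fin_S r(1)]
  proof (rule card_UN_disjoint[OF finite_intermediate_subspaces[OF X(2)]])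
    show "\<forall>U\<in>?Us. finite (independent_extensions U S ?k)"
      using intermediate_subspacesD(5)[OF _ X(2)] finite_independent_extensions by blast
    show "\<forall>U\<in>?Us. \<forall>U'\<in>?Us. U \<noteq> U' \<longrightarrow>
        independent_extensions U S ?k \<inter> independent_extensions U' S ?k = {}"
      using span_eq_if_independent_extension[OF _ X(2) _ fin_S r(1)] by blast
  qed
  moreover have "real (card (independent_extensions U S ?k)) = qfall_prod CARD('a) r (card S) ?k"
    if "U \<in> ?Us" for U
    using card_independent_extensions[of U r S ?k] intermediate_subspacesD[OF that X(2)] S r by auto
  ultimately have "real (card (independent_extensions X S ?k)) =
      real (card ?Us) * qfall_prod CARD('a) r (card S) ?k"
    by simp
  then show ?thesis
    using card_independent_extensions[OF X S, of ?k] r by simp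
qed

lemma card_intermediate_subspaces_bounds:
  fixes X :: "(nat \<Rightarrow> 'a::{field,finite}) set"
  assumes X: "lin.subspace X" "finite X" "card X = CARD('a) ^ m"
    and S: "S \<subseteq> X" "lin.independent S" and r: "card S \<le> r" "r \<le> m"
  defines "k \<equiv> r - card S"
  shows "real (card (intermediate_subspaces X S r)) \<le> real CARD('a) ^ (m * k) / real CARD('a) ^ ((r - 1) * k)"
    and "real CARD('a) ^ ((m - 1) * k) / real CARD('a) ^ (r * k) \<le> real (card (intermediate_subspaces X S r))"
proof -
  let ?q = "CARD('a)"
  have "card S + k \<le> r" "card S + k \<le> m"
    using r by (auto simp: k_def)
  note small = qfall_prod_bounds[OF card_field_ge_2[where 'a='a] this(1)]
    and large = qfall_prod_bounds[OF card_field_ge_2[where 'a='a] this(2)]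
  have card_eq: "real (card (intermediate_subspaces X S r)) = qfall_prod ?q m (card S) k / qfall_prod ?q r (card S) k"
    using card_intermediate_subspaces[OF X S r] small(3) by (simp add: k_def field_simps)
  show "real (card (intermediate_subspaces X S r)) \<le> real ?q ^ (m * k) / real ?q ^ ((r - 1) * k)"
    unfolding card_eq using small large by (intro frac_le) auto
  show "real ?q ^ ((m - 1) * k) / real ?q ^ (r * k) \<le> real (card (intermediate_subspaces X S r))"
    unfolding card_eq using small large card_field_ge_2[where 'a='a] by (intro frac_le) auto
qed

lemma Er_eq_intermediate_subspaces: "Er n r = intermediate_subspaces (Vn n) {} r"
  by (auto simp: Er_def intermediate_subspaces_def sdim_eq_dim)

lemma finite_Er: "finite (Er n r :: (nat \<Rightarrow> 'a::{field,finite}) set set)"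
  by (simp add: Er_eq_intermediate_subspaces finite_intermediate_subspaces finite_Vn)

lemma ErD:
  fixes U :: "(nat \<Rightarrow> 'a::{field,finite}) set"
  assumes "U \<in> Er n r"
  shows "lin.subspace U" "U \<subseteq> Vn n" "lin.dim U = r" "finite U" "card U = CARD('a) ^ r"
  using intermediate_subspacesD[OF assms[unfolded Er_eq_intermediate_subspaces] finite_Vn] by auto

lemma gauss_binom_eq_qfall_prod: "gauss_binom q m k = qfall_prod q m 0 k / qfall_prod q k 0 k"
  by (simp add: gauss_binom_def qfall_prod_def prod_dividef)

lemma card_Er:
  assumes "r \<le> n"
  shows "real (card (Er n r :: (nat \<Rightarrow> 'a::{field,finite}) set set)) = gauss_binom CARD('a) n r"
  using card_intermediate_subspaces[of "Vn n" n "{}" r, OF subspace_Vn finite_Vn card_Vn[where 'a='a]]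
    qfall_prod_bounds(3)[OF card_field_ge_2[where 'a='a], of 0 r r] assms lin.independent_empty
  by (simp add: Er_eq_intermediate_subspaces gauss_binom_eq_qfall_prod field_simps)

lemma log_power_div_power:
  fixes q :: real
  assumes "1 < q"
  shows "log q (q ^ a / q ^ b) = real a - real b"
  using assms by (simp add: log_divide log_nat_power)

lemma gauss_binom_pos:
  assumes "2 \<le> q" "k \<le> m"
  shows "0 < gauss_binom q m k"
  using qfall_prod_bounds(3)[OF assms(1), of 0 k m] qfall_prod_bounds(3)[OF assms(1), of 0 k k] assms(2)
  by (simp add: gauss_binom_eq_qfall_prod)

lemma log_gauss_binom_bounds:
  assumes q: "2 \<le> q" and r: "1 \<le> r" "r \<le> n"
  shows "real r * (real n - real r) - real r \<le> log (real q) (gauss_binom q n r)"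
    and "log (real q) (gauss_binom q n r) \<le> real r * (real n - real r) + real r"
proof -
  have q1: "1 < real q"
    using q by simp
  note large = qfall_prod_bounds[OF q, of 0 r n] and small = qfall_prod_bounds[OF q, of 0 r r]
  have pos: "0 < gauss_binom q n r"
    using gauss_binom_pos[OF q r(2)] .
  have "real q ^ ((n - 1) * r) / real q ^ (r * r) \<le> gauss_binom q n r"
    unfolding gauss_binom_eq_qfall_prod using large small r q by (intro frac_le) auto
  then have "log (real q) (real q ^ ((n - 1) * r) / real q ^ (r * r)) \<le> log (real q) (gauss_binom q n r)"
    using q1 pos by (subst log_le_cancel_iff) auto
  then show "real r * (real n - real r) - real r \<le> log (real q) (gauss_binom q n r)"
    using r q1 by (simp add: log_power_div_power of_nat_diff algebra_simps)
  have "gauss_binom q n r \<le> real q ^ (n * r) / real q ^ ((r - 1) * r)"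
    unfolding gauss_binom_eq_qfall_prod using large small r q by (intro frac_le) auto
  then have "log (real q) (gauss_binom q n r) \<le> log (real q) (real q ^ (n * r) / real q ^ ((r - 1) * r))"
    using q1 pos by (subst log_le_cancel_iff) auto
  then show "log (real q) (gauss_binom q n r) \<le> real r * (real n - real r) + real r"
    using r q1 by (simp add: log_power_div_power of_nat_diff algebra_simps)
qed

lemma Er_nonempty:
  "r \<le> n \<Longrightarrow> (Er n r :: (nat \<Rightarrow> 'a::{field,finite}) set set) \<noteq> {}"
  using card_Er[of r n, where 'a='a] gauss_binom_pos[OF card_field_ge_2[where 'a='a], of r n] by auto

definition inj_ball :: "nat \<Rightarrow> nat \<Rightarrow> nat \<Rightarrow> (nat \<Rightarrow> 'a::{field,finite}) set \<Rightarrow> (nat \<Rightarrow> 'a) set set" where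
  "inj_ball n r \<rho> U = {V \<in> Er n r. dI U V \<le> \<rho>}"

lemma dI_Er: "U \<in> Er n r \<Longrightarrow> W \<in> Er n r \<Longrightarrow> dI U W = lin.dim (lin.span (U \<union> W)) - r"
  by (simp add: dI_def Er_def sdim_eq_dim)

lemma dI_sym: "dI U W = dI W U"
  by (simp add: dI_def Un_commute min.commute)

lemma dI_self: "dI U U = 0"
  by (simp add: dI_def sdim_eq_dim)

lemma finite_inj_ball: "finite (inj_ball n r \<rho> U)"
  using finite_Er by (rule finite_subset[rotated]) (auto simp: inj_ball_def)

lemma power_div_power_eq_powr:
  fixes q :: real
  assumes "0 < q"
  shows "q ^ a / q ^ b = q powr (real a - real b)"
  using assms by (simp add: powr_diff powr_realpow)

lemma card_le_card_image_mult:
  assumes "finite A" and fibre: "\<And>y. y \<in> f ` A \<Longrightarrow> card {x \<in> A. f x = y} \<le> c"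
  shows "card A \<le> card (f ` A) * c"
proof -
  have "A = (\<Union>y\<in>f ` A. {x \<in> A. f x = y})"
    by auto
  then have "card A \<le> (\<Sum>y\<in>f ` A. card {x \<in> A. f x = y})"
    by (metis card_UN_le finite_imageI[OF \<open>finite A\<close>])
  also have "\<dots> \<le> card (f ` A) * c"
    using sum_bounded_above[of "f ` A" "\<lambda>y. card {x \<in> A. f x = y}" c] fibre by simp
  finally show ?thesis .
qed

lemma inj_ball_subset_UN:
  fixes U :: "(nat \<Rightarrow> 'a::{field,finite}) set"
  assumes U: "U \<in> Er n r" and BU: "BU \<subseteq> U" and n: "r + \<rho> \<le> n"
  shows "inj_ball n r \<rho> U \<subseteq>
    (\<Union>X\<in>intermediate_subspaces (Vn n) BU (r + \<rho>). intermediate_subspaces X {} r)"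
proof
  fix W assume "W \<in> inj_ball n r \<rho> U"
  then have W: "W \<in> Er n r" and dist: "dI U W \<le> \<rho>"
    by (auto simp: inj_ball_def)
  let ?Y = "lin.span (U \<union> W)"
  have "?Y \<subseteq> Vn n"
    using ErD[OF U] ErD[OF W] by (intro lin.span_minimal[OF _ subspace_Vn]) auto
  moreover have "lin.dim ?Y \<le> r + \<rho>"
    using dist dI_Er[OF U W] by simp
  ultimately obtain X where X: "lin.subspace X" "?Y \<subseteq> X" "X \<subseteq> Vn n" "lin.dim X = r + \<rho>"
    using subspace_extend_dim[OF lin.subspace_span _ _ n] by blast
  have "U \<union> W \<subseteq> ?Y"
    by (rule lin.span_superset)
  then have "X \<in> intermediate_subspaces (Vn n) BU (r + \<rho>)" "W \<in> intermediate_subspaces X {} r"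
    using X BU ErD[OF W] by (auto simp: intermediate_subspaces_def)
  then show "W \<in> (\<Union>X\<in>intermediate_subspaces (Vn n) BU (r + \<rho>). intermediate_subspaces X {} r)"
    by blast
qed

lemma card_inj_ball_le:
  fixes U :: "(nat \<Rightarrow> 'a::{field,finite}) set"
  assumes U: "U \<in> Er n r" and r: "1 \<le> r" and n: "r + \<rho> \<le> n"
  shows "real (card (inj_ball n r \<rho> U)) \<le>
    real CARD('a) powr (real \<rho> * (real n - real \<rho>) + real \<rho> + real r)"
proof -
  let ?q = "real CARD('a)"
  obtain BU where BU: "BU \<subseteq> U" "lin.independent BU" "card BU = r"
    using subspace_obtain_basis[OF ErD(1,4)[OF U]] ErD(3)[OF U] by metis
  then have BU_Vn: "BU \<subseteq> Vn n"
    using ErD(2)[OF U] by auto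
  have count_Xs: "real (card (intermediate_subspaces (Vn n) BU (r + \<rho>))) \<le>
      ?q ^ (n * \<rho>) / ?q ^ ((r + \<rho> - 1) * \<rho>)"
    using card_intermediate_subspaces_bounds(1)[OF subspace_Vn finite_Vn card_Vn BU_Vn BU(2), of "r + \<rho>"]
      BU n by simp
  have count_in_X: "real (card (intermediate_subspaces X {} r)) \<le> ?q ^ ((r + \<rho>) * r) / ?q ^ ((r - 1) * r)"
    if "X \<in> intermediate_subspaces (Vn n) BU (r + \<rho>)" for X
    using card_intermediate_subspaces_bounds(1)[of X "r + \<rho>" "{}" r]
      intermediate_subspacesD[OF that finite_Vn] lin.independent_empty by simp
  have "card (inj_ball n r \<rho> U) \<le>
      card (\<Union>X\<in>intermediate_subspaces (Vn n) BU (r + \<rho>). intermediate_subspaces X {} r)"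
    using inj_ball_subset_UN[OF U BU(1) n] finite_intermediate_subspaces[OF finite_Vn]
      finite_intermediate_subspaces[OF intermediate_subspacesD(5)[OF _ finite_Vn]]
    by (intro card_mono finite_UN_I) auto
  also have "\<dots> \<le> (\<Sum>X\<in>intermediate_subspaces (Vn n) BU (r + \<rho>). card (intermediate_subspaces X {} r))"
    using finite_intermediate_subspaces[OF finite_Vn] by (rule card_UN_le)
  finally have "real (card (inj_ball n r \<rho> U)) \<le>
      (\<Sum>X\<in>intermediate_subspaces (Vn n) BU (r + \<rho>). real (card (intermediate_subspaces X {} r)))"
    by (metis of_nat_le_iff of_nat_sum)
  also have "\<dots> \<le> real (card (intermediate_subspaces (Vn n) BU (r + \<rho>))) *
      (?q ^ ((r + \<rho>) * r) / ?q ^ ((r - 1) * r))"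
    using sum_bounded_above count_in_X by (metis (no_types, lifting))
  also have "\<dots> \<le> (?q ^ (n * \<rho>) / ?q ^ ((r + \<rho> - 1) * \<rho>)) * (?q ^ ((r + \<rho>) * r) / ?q ^ ((r - 1) * r))"
    using count_Xs by (intro mult_right_mono) auto
  also have "\<dots> = ?q powr (real (n * \<rho>) - real ((r + \<rho> - 1) * \<rho>) + (real ((r + \<rho>) * r) - real ((r - 1) * r)))"
    by (simp add: power_div_power_eq_powr powr_add)
  also have "real (n * \<rho>) - real ((r + \<rho> - 1) * \<rho>) + (real ((r + \<rho>) * r) - real ((r - 1) * r)) =
      real \<rho> * (real n - real \<rho>) + real \<rho> + real r"
  proof -
    have "real (r + \<rho> - 1) = real r + real \<rho> - 1" "real (r - 1) = real r - 1"
      using r by auto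
    then show ?thesis
      unfolding of_nat_mult of_nat_add by (simp add: algebra_simps)
  qed
  finally show ?thesis .
qed

lemma span_extension_in_inj_ball:
  fixes U :: "(nat \<Rightarrow> 'a::{field,finite}) set"
  assumes U: "U \<in> Er n r"
    and BU: "lin.independent BU" "lin.span BU = U" "card BU = r" "finite BU"
    and BW: "BW \<subseteq> BU" "card BW = r - \<rho>" and \<rho>: "\<rho> \<le> r"
    and vs: "vs \<in> independent_extensions (Vn n) BU \<rho>"
  shows "lin.span (BW \<union> set vs) \<in> inj_ball n r \<rho> U"
    and "lin.span (BW \<union> set vs) \<inter> U = lin.span BW"
proof -
  have ind: "lin.independent (BU \<union> set vs)" and card_BU_vs: "card (BU \<union> set vs) = r + \<rho>"
    using independent_extensionsD[OF vs BU(4)] BU(3) by auto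
  have vs_BU: "set vs \<inter> BU = {}" "distinct vs" "length vs = \<rho>" "set vs \<subseteq> Vn n"
    using vs by (auto simp: independent_extensions_def)
  have "lin.independent (BW \<union> set vs)"
    using lin.independent_mono[OF ind, of "BW \<union> set vs"] BW(1) by blast
  moreover have "card (BW \<union> set vs) = r"
    using vs_BU BW \<rho> finite_subset[OF BW(1) BU(4)]
    by (subst card_Un_disjoint) (auto simp: distinct_card)
  ultimately have "lin.dim (lin.span (BW \<union> set vs)) = r"
    by (simp add: lin.dim_eq_card_independent)
  moreover have "lin.span (BW \<union> set vs) \<subseteq> Vn n"
  proof (rule lin.span_minimal[OF _ subspace_Vn])
    show "BW \<union> set vs \<subseteq> Vn n"
      using vs_BU BW(1) BU(2) ErD(2)[OF U] lin.span_superset[of BU] by auto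
  qed
  ultimately have "lin.span (BW \<union> set vs) \<in> Er n r"
    by (simp add: Er_def sdim_eq_dim)
  moreover have "lin.dim (lin.span (U \<union> lin.span (BW \<union> set vs))) \<le> r + \<rho>"
  proof -
    have "U \<union> lin.span (BW \<union> set vs) \<subseteq> lin.span (BU \<union> set vs)"
      using BU(2) BW(1) lin.span_mono[of BU "BU \<union> set vs"] lin.span_mono[of "BW \<union> set vs" "BU \<union> set vs"]
      by auto
    then have "lin.dim (lin.span (U \<union> lin.span (BW \<union> set vs))) \<le> card (BU \<union> set vs)"
      by (intro lin.dim_le_card) (auto simp: BU(4) lin.span_minimal)
    then show ?thesis
      using card_BU_vs by simp
  qed
  ultimately show "lin.span (BW \<union> set vs) \<in> inj_ball n r \<rho> U"
    using dI_Er[OF U] by (simp add: inj_ball_def)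
  have "BU = BW \<union> (BU - BW)"
    using BW(1) by auto
  then show "lin.span (BW \<union> set vs) \<inter> U = lin.span BW"
    using span_Un_Int_span_Un[of BW "BU - BW" "set vs"] ind vs_BU(1) BU(2,4) by auto
qed

lemma subspace_obtain_basis_extension:
  fixes U W :: "(nat \<Rightarrow> 'a::{field,finite}) set"
  assumes U: "lin.subspace U" "finite U" and W: "lin.subspace W" "W \<subseteq> U"
  obtains BW BU where "BW \<subseteq> BU" "lin.span BW = W" "card BW = lin.dim W"
    "lin.independent BU" "lin.span BU = U" "card BU = lin.dim U" "finite BU"
proof -
  obtain BW where BW: "BW \<subseteq> W" "lin.independent BW" "lin.span BW = W" "card BW = lin.dim W" "finite BW"
    using subspace_obtain_basis[OF W(1) finite_subset[OF W(2) U(2)]] by blast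
  have "CARD('a) ^ lin.dim W \<le> CARD('a) ^ lin.dim U"
    using card_mono[OF U(2) W(2)] card_subspace[OF W(1) finite_subset[OF W(2) U(2)]] card_subspace[OF U]
    by simp
  then have "lin.dim W \<le> lin.dim U"
    using card_field_ge_2[where 'a='a] by (simp add: power_le_imp_le_exp)
  then obtain ws where ws: "ws \<in> independent_extensions U BW (lin.dim U - lin.dim W)"
    using independent_extensions_nonempty[OF U card_subspace[OF U] _ BW(2)] BW(1,4) W(2) by fastforce
  define BU where "BU = BW \<union> set ws"
  have BU: "lin.independent BU" "card BU = lin.dim U" "finite BU"
    using independent_extensionsD[OF ws BW(5)] BW(4,5) \<open>lin.dim W \<le> lin.dim U\<close> by (auto simp: BU_def)
  moreover have "lin.span BU = U"
    using span_eq_if_card_eq_dim[OF U] independent_extensionsD(3)[OF ws] BU BW(1) W(2)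
    by (auto simp: BU_def)
  ultimately show ?thesis
    using that[of BW BU] BW by (auto simp: BU_def)
qed

lemma card_extensions_spanning_le:
  fixes Y :: "(nat \<Rightarrow> 'a::{field,finite}) set"
  assumes Y: "Y \<in> Er n r" and BW: "BW \<subseteq> BU" "BW \<subseteq> Y" "lin.independent BW" "card BW + \<rho> \<le> r"
    and BU: "finite BU"
  shows "card {vs \<in> independent_extensions X BU \<rho>. lin.span (BW \<union> set vs) = Y} \<le> CARD('a) ^ (r * \<rho>)"
proof -
  have "{vs \<in> independent_extensions X BU \<rho>. lin.span (BW \<union> set vs) = Y} \<subseteq> independent_extensions Y BW \<rho>"
  proof
    fix vs assume "vs \<in> {vs \<in> independent_extensions X BU \<rho>. lin.span (BW \<union> set vs) = Y}"
    then have vs: "vs \<in> independent_extensions X BU \<rho>" and span_vs: "lin.span (BW \<union> set vs) = Y"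
      by auto
    have "lin.independent (BW \<union> set vs)"
      using lin.independent_mono[OF independent_extensionsD(2)[OF vs BU], of "BW \<union> set vs"] BW(1)
      by blast
    moreover have "set vs \<subseteq> Y"
      using span_vs lin.span_superset[of "BW \<union> set vs"] by auto
    ultimately show "vs \<in> independent_extensions Y BW \<rho>"
      using vs BW(1) by (auto simp: independent_extensions_def)
  qed
  then have "real (card {vs \<in> independent_extensions X BU \<rho>. lin.span (BW \<union> set vs) = Y}) \<le>
      real (card (independent_extensions Y BW \<rho>))"
    using finite_independent_extensions[OF ErD(4)[OF Y]] by (simp add: card_mono)
  also have "\<dots> \<le> real CARD('a) ^ (r * \<rho>)"
    using card_independent_extensions[OF ErD(1,4,5)[OF Y] BW(2,3) BW(4)]
      qfall_prod_bounds(2)[OF card_field_ge_2[where 'a='a] BW(4)] by simp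
  finally show ?thesis
    by (simp only: of_nat_le_iff of_nat_power[symmetric])
qed

lemma card_inj_ball_Int_ge:
  fixes U :: "(nat \<Rightarrow> 'a::{field,finite}) set"
  assumes U: "U \<in> Er n r" and \<rho>: "\<rho> \<le> r" and n: "r + \<rho> \<le> n"
    and W: "W \<in> intermediate_subspaces U {} (r - \<rho>)"
  shows "real CARD('a) ^ ((n - 1) * \<rho>) / real CARD('a) ^ (r * \<rho>) \<le>
    real (card {Y \<in> inj_ball n r \<rho> U. Y \<inter> U = W})"
proof -
  let ?q = "real CARD('a)"
  have q: "1 < ?q"
    using card_field_ge_2[where 'a='a] by simp
  note W' = intermediate_subspacesD[OF W ErD(4)[OF U]]
  obtain BW BU where BW: "BW \<subseteq> BU" "lin.span BW = W" "card BW = r - \<rho>"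
    and BU: "lin.independent BU" "lin.span BU = U" "card BU = r" "finite BU"
    using subspace_obtain_basis_extension[OF ErD(1,4)[OF U] W'(1,3)] W'(4) ErD(3)[OF U] by metis
  note in_ball = span_extension_in_inj_ball[OF U BU BW(1,3) \<rho>]
  have ind_BW: "lin.independent BW"
    using lin.independent_mono[OF BU(1) BW(1)] .
  \<comment> \<open>The spaces \<open>span (BW \<union> set vs)\<close> with \<open>vs\<close> independent modulo \<open>U\<close> meet \<open>U\<close> in \<open>W\<close>,
    and each arises from at most \<open>q ^ (r * \<rho>)\<close> lists \<open>vs\<close>.\<close>
  define E where "E = independent_extensions (Vn n) BU \<rho>"
  define f where "f vs = lin.span (BW \<union> set vs)" for vs
  have "BU \<subseteq> Vn n"
    using BU(2) lin.span_superset[of BU] ErD(2)[OF U] by blast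
  then have "real (card E) = qfall_prod CARD('a) n r \<rho>"
    using card_independent_extensions[of "Vn n" n BU \<rho>, OF subspace_Vn finite_Vn card_Vn] BU(1,3) n
    by (simp add: E_def)
  then have "?q ^ ((n - 1) * \<rho>) \<le> real (card E)"
    using qfall_prod_bounds(1)[OF card_field_ge_2[where 'a='a], of r \<rho> n] n by simp
  also have "real (card E) \<le> real (card (f ` E)) * ?q ^ (r * \<rho>)"
  proof -
    have "card {vs \<in> E. f vs = Y} \<le> CARD('a) ^ (r * \<rho>)" if "Y \<in> f ` E" for Y
    proof -
      obtain vs where vs: "vs \<in> E" "Y = f vs"
        using \<open>Y \<in> f ` E\<close> by blast
      have "Y \<in> Er n r"
        using in_ball(1)[of vs] vs by (simp add: E_def f_def inj_ball_def)
      moreover have "BW \<subseteq> Y"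
        using vs lin.span_superset[of "BW \<union> set vs"] by (auto simp: f_def)
      ultimately show ?thesis
        unfolding E_def f_def using BU(4) BW(1,3) ind_BW \<rho> by (intro card_extensions_spanning_le) auto
    qed
    then have "card E \<le> card (f ` E) * CARD('a) ^ (r * \<rho>)"
      using finite_independent_extensions[OF finite_Vn] by (intro card_le_card_image_mult) (auto simp: E_def)
    then have "real (card E) \<le> real (card (f ` E) * CARD('a) ^ (r * \<rho>))"
      by (simp only: of_nat_le_iff)
    then show ?thesis
      by simp
  qed
  finally have "?q ^ ((n - 1) * \<rho>) / ?q ^ (r * \<rho>) \<le> real (card (f ` E))"
    using q by (simp add: divide_le_eq)
  moreover have "f ` E \<subseteq> {Y \<in> inj_ball n r \<rho> U. Y \<inter> U = W}"
    using in_ball BU(2) BW(2) by (auto simp: E_def f_def)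
  then have "card (f ` E) \<le> card {Y \<in> inj_ball n r \<rho> U. Y \<inter> U = W}"
    by (rule card_mono[rotated]) (rule finite_subset[OF _ finite_inj_ball], auto)
  ultimately show ?thesis
    by linarith
qed

lemma card_inj_ball_ge:
  fixes U :: "(nat \<Rightarrow> 'a::{field,finite}) set"
  assumes U: "U \<in> Er n r" and r: "1 \<le> r" and \<rho>: "\<rho> \<le> r" and n: "r + \<rho> \<le> n"
  shows "real CARD('a) powr (real \<rho> * (real n - real \<rho>) - real r) \<le> real (card (inj_ball n r \<rho> U))"
proof -
  let ?q = "real CARD('a)"
  let ?Ws = "intermediate_subspaces U {} (r - \<rho>)"
  let ?per_W = "?q ^ ((n - 1) * \<rho>) / ?q ^ (r * \<rho>)"
  have count_Ws: "?q ^ ((r - 1) * (r - \<rho>)) / ?q ^ ((r - \<rho>) * (r - \<rho>)) \<le> real (card ?Ws)"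
    using card_intermediate_subspaces_bounds(2)[OF ErD(1,4,5)[OF U], of "{}" "r - \<rho>"]
      lin.independent_empty by simp
  have "(?q ^ ((r - 1) * (r - \<rho>)) / ?q ^ ((r - \<rho>) * (r - \<rho>))) * ?per_W \<le> real (card ?Ws) * ?per_W"
    by (rule mult_right_mono[OF count_Ws]) simp
  also have "\<dots> \<le> (\<Sum>W\<in>?Ws. real (card {Y \<in> inj_ball n r \<rho> U. Y \<inter> U = W}))"
    using sum_bounded_below[of ?Ws ?per_W] card_inj_ball_Int_ge[OF U \<rho> n] by simp
  also have "\<dots> = real (card (\<Union>W\<in>?Ws. {Y \<in> inj_ball n r \<rho> U. Y \<inter> U = W}))"
  proof -
    have "finite {Y \<in> inj_ball n r \<rho> U. Y \<inter> U = W}" for W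
      by (rule finite_subset[OF _ finite_inj_ball]) auto
    then show ?thesis
      using finite_intermediate_subspaces[OF ErD(4)[OF U]] by (subst card_UN_disjoint) auto
  qed
  also have "\<dots> \<le> real (card (inj_ball n r \<rho> U))"
    using finite_inj_ball by (intro of_nat_mono card_mono) auto
  finally have "(?q ^ ((r - 1) * (r - \<rho>)) / ?q ^ ((r - \<rho>) * (r - \<rho>))) * ?per_W \<le>
      real (card (inj_ball n r \<rho> U))" .
  moreover have "(?q ^ ((r - 1) * (r - \<rho>)) / ?q ^ ((r - \<rho>) * (r - \<rho>))) * ?per_W =
      ?q powr (real ((r - 1) * (r - \<rho>)) - real ((r - \<rho>) * (r - \<rho>)) +
        (real ((n - 1) * \<rho>) - real (r * \<rho>)))"
    by (simp add: power_div_power_eq_powr powr_add)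
  moreover have "real ((r - 1) * (r - \<rho>)) - real ((r - \<rho>) * (r - \<rho>)) + (real ((n - 1) * \<rho>) - real (r * \<rho>)) =
      real \<rho> * (real n - real \<rho>) - real r"
  proof -
    have "real (r - 1) = real r - 1" "real (r - \<rho>) = real r - real \<rho>" "real (n - 1) = real n - 1"
      using r \<rho> n by auto
    then show ?thesis
      unfolding of_nat_mult by (simp add: algebra_simps)
  qed
  ultimately show ?thesis
    by simp
qed

lemma exists_covers_fraction:
  fixes X :: "'b set"
  assumes X: "finite X" and Y: "Y \<subseteq> X" "Y \<noteq> {}"
    and deg: "\<And>x. x \<in> X \<Longrightarrow> D \<le> real (card {c \<in> X. R x c})"
  shows "\<exists>c\<in>X. real (card Y) * D / real (card X) \<le> real (card {y \<in> Y. R y c})"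
proof (rule ccontr)
  assume "\<not> ?thesis"
  then have less: "\<And>c. c \<in> X \<Longrightarrow> real (card {y \<in> Y. R y c}) < real (card Y) * D / real (card X)"
    by force
  have fin_Y: "finite Y" and "X \<noteq> {}"
    using Y X finite_subset by auto
  have "(\<Sum>c\<in>X. real (card {y \<in> Y. R y c})) < (\<Sum>c\<in>X. real (card Y) * D / real (card X))"
    by (rule sum_strict_mono[OF X \<open>X \<noteq> {}\<close> less])
  also have "\<dots> = real (card Y) * D"
    using X \<open>X \<noteq> {}\<close> by simp
  also have "\<dots> \<le> (\<Sum>y\<in>Y. real (card {c \<in> X. R y c}))"
    using sum_bounded_below[of Y D "\<lambda>y. real (card {c \<in> X. R y c})"] deg Y by (auto simp: mult.commute)
  also have "\<dots> = (\<Sum>y\<in>Y. \<Sum>c\<in>X. if R y c then 1 else 0)"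
    using X by (simp add: sum.inter_filter[symmetric])
  also have "\<dots> = (\<Sum>c\<in>X. \<Sum>y\<in>Y. if R y c then 1 else 0)"
    by (rule sum.swap)
  also have "\<dots> = (\<Sum>c\<in>X. real (card {y \<in> Y. R y c}))"
    using fin_Y by (simp add: sum.inter_filter[symmetric])
  finally show False
    by simp
qed

lemma greedy_step:
  fixes X :: "'b set"
  assumes X: "finite X" and deg: "\<And>x. x \<in> X \<Longrightarrow> D \<le> real (card {c \<in> X. R x c})"
    and uncovered: "{x \<in> X. \<not> (\<exists>c\<in>C. R x c)} \<noteq> {}"
  shows "\<exists>c\<in>X. real (card {x \<in> X. \<not> (\<exists>c'\<in>insert c C. R x c')}) \<le>
    real (card {x \<in> X. \<not> (\<exists>c\<in>C. R x c)}) * (1 - D / real (card X))"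
proof -
  let ?U = "{x \<in> X. \<not> (\<exists>c\<in>C. R x c)}"
  have "\<exists>c\<in>X. real (card ?U) * D / real (card X) \<le> real (card {y \<in> ?U. R y c})"
    by (rule exists_covers_fraction[OF X Collect_restrict uncovered deg])
  then obtain c where c: "c \<in> X" "real (card ?U) * D / real (card X) \<le> real (card {y \<in> ?U. R y c})"
    by blast
  have fin: "finite ?U"
    using X by (rule finite_subset[OF Collect_restrict])
  have "{x \<in> X. \<not> (\<exists>c'\<in>insert c C. R x c')} = ?U - {y \<in> ?U. R y c}"
    by auto
  moreover have "card (?U - {y \<in> ?U. R y c}) = card ?U - card {y \<in> ?U. R y c}"
    by (rule card_Diff_subset[OF finite_subset[OF _ fin]]) auto
  moreover have "card {y \<in> ?U. R y c} \<le> card ?U"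
    using fin by (intro card_mono) auto
  ultimately have "real (card {x \<in> X. \<not> (\<exists>c'\<in>insert c C. R x c')}) =
      real (card ?U) - real (card {y \<in> ?U. R y c})"
    by (simp add: of_nat_diff)
  also have "\<dots> \<le> real (card ?U) * (1 - D / real (card X))"
    using c(2) by (simp add: algebra_simps)
  finally show ?thesis
    using c(1) by blast
qed

lemma greedy_cover_iterate:
  fixes X :: "'b set"
  assumes X: "finite X" and deg: "\<And>x. x \<in> X \<Longrightarrow> D \<le> real (card {c \<in> X. R x c})"
    and D: "D \<le> real (card X)"
  shows "\<exists>C\<subseteq>X. card C \<le> t \<and>
    real (card {x \<in> X. \<not> (\<exists>c\<in>C. R x c)}) \<le> real (card X) * (1 - D / real (card X)) ^ t"
proof (induction t)
  case 0
  show ?case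
    by (intro exI[of _ "{}"]) simp
next
  case (Suc t)
  let ?p = "D / real (card X)" and ?unc = "\<lambda>C. {x \<in> X. \<not> (\<exists>c\<in>C. R x c)}"
  obtain C where C: "C \<subseteq> X" "card C \<le> t" "real (card (?unc C)) \<le> real (card X) * (1 - ?p) ^ t"
    using Suc by blast
  have "?p \<le> 1"
    using D by (cases "card X = 0") (simp_all add: divide_le_eq_1)
  then have p: "0 \<le> 1 - ?p"
    by simp
  show ?case
  proof (cases "?unc C = {}")
    case True
    have "card (?unc C) = 0"
      by (simp only: True card.empty)
    then have "real (card (?unc C)) \<le> real (card X) * (1 - ?p) ^ Suc t"
      using p by simp
    moreover have "card C \<le> Suc t"
      using C(2) by simp
    ultimately show ?thesis
      using C(1) by blast
  next
    case False
    then obtain c where c: "c \<in> X" "real (card (?unc (insert c C))) \<le> real (card (?unc C)) * (1 - ?p)"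
      using greedy_step[where R = R, OF X deg] by blast
    note c(2)
    also have "real (card (?unc C)) * (1 - ?p) \<le> real (card X) * (1 - ?p) ^ t * (1 - ?p)"
      using C(3) p by (rule mult_right_mono)
    finally have "real (card (?unc (insert c C))) \<le> real (card X) * (1 - ?p) ^ Suc t"
      by (simp add: ac_simps)
    moreover have "card (insert c C) \<le> Suc t"
      using C(2) finite_subset[OF C(1) X] by (simp add: card_insert_if)
    ultimately show ?thesis
      using C(1) c(1) by (intro exI[of _ "insert c C"]) auto
  qed
qed

lemma mult_one_minus_power_less_one:
  fixes N p :: real
  assumes N: "1 \<le> N" and p: "0 < p" "p \<le> 1" and t: "ln N / p < real t"
  shows "N * (1 - p) ^ t < 1"
proof -
  have "(1 - p) ^ t \<le> exp (- p) ^ t"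
    using p exp_ge_add_one_self[of "- p"] by (intro power_mono) auto
  also have "\<dots> = exp (- (p * real t))"
    by (simp add: exp_of_nat_mult[symmetric])
  also have "\<dots> < exp (- ln N)"
    using t p by (simp add: field_simps)
  also have "\<dots> = 1 / N"
    using N by (simp add: exp_minus inverse_eq_divide)
  finally show ?thesis
    using N by (simp add: field_simps)
qed

lemma greedy_cover:
  fixes X :: "'b set"
  assumes X: "finite X" "X \<noteq> {}" and D: "0 < D"
    and deg: "\<And>x. x \<in> X \<Longrightarrow> D \<le> real (card {c \<in> X. R x c})"
  obtains C where "C \<subseteq> X" "C \<noteq> {}" "\<forall>x\<in>X. \<exists>c\<in>C. R x c"
    "real (card C) \<le> real (card X) / D * (ln (real (card X)) + 1)"
proof -
  define N where "N = real (card X)"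
  define p where "p = D / N"
  have N: "1 \<le> N"
    using X by (simp add: N_def Suc_le_eq card_gt_0_iff)
  obtain x where "x \<in> X"
    using X by blast
  then have "D \<le> N"
    using deg[of x] card_mono[OF X(1), of "{c \<in> X. R x c}"] by (auto simp: N_def)
  then have p: "0 < p" "p \<le> 1"
    using D N by (auto simp: p_def)
  have ln_N: "0 \<le> ln N"
    using N by simp
  define t where "t = nat \<lfloor>ln N / p\<rfloor> + 1"
  obtain C where C: "C \<subseteq> X" "card C \<le> t" "real (card {x \<in> X. \<not> (\<exists>c\<in>C. R x c)}) \<le> N * (1 - p) ^ t"
    using greedy_cover_iterate[of X D R t, OF X(1) deg \<open>D \<le> N\<close>[unfolded N_def]] by (auto simp: N_def p_def)
  have "ln N / p < real t"
    unfolding t_def using ln_N p by linarith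
  then have "N * (1 - p) ^ t < 1"
    using mult_one_minus_power_less_one N p by blast
  then have "real (card {x \<in> X. \<not> (\<exists>c\<in>C. R x c)}) < 1"
    using C(3) by linarith
  then have "{x \<in> X. \<not> (\<exists>c\<in>C. R x c)} = {}"
    using X(1) by simp
  then have cover: "\<forall>x\<in>X. \<exists>c\<in>C. R x c"
    by blast
  then have "C \<noteq> {}"
    using X(2) by blast
  moreover have "real (card C) \<le> N / D * (ln N + 1)"
  proof -
    have "real (card C) \<le> real t"
      using C(2) by simp
    also have "\<dots> \<le> ln N / p + 1"
      unfolding t_def using ln_N p by simp
    also have "\<dots> \<le> ln N / p + 1 / p"
      using p by (simp add: field_simps)
    also have "\<dots> = N / D * (ln N + 1)"
      using D N by (simp add: p_def field_simps)
    finally show ?thesis .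
  qed
  ultimately show ?thesis
    using that C(1) cover by (simp add: N_def)
qed

lemma covrad_le_iff:
  fixes Cs :: "(nat \<Rightarrow> 'a::{field,finite}) set set"
  assumes "Cs \<subseteq> Er n r" "Cs \<noteq> {}" "r \<le> n"
  shows "covrad n r Cs \<le> \<rho> \<longleftrightarrow> (\<forall>U\<in>Er n r. \<exists>C\<in>Cs. dI U C \<le> \<rho>)"
proof -
  have fin: "finite Cs"
    using assms(1) finite_Er finite_subset by blast
  have "finite ((\<lambda>U. Min ((\<lambda>C. dI U C) ` Cs)) ` (Er n r :: (nat \<Rightarrow> 'a) set set))"
    by (rule finite_imageI[OF finite_Er])
  moreover have "(\<lambda>U. Min ((\<lambda>C. dI U C) ` Cs)) ` (Er n r :: (nat \<Rightarrow> 'a) set set) \<noteq> {}"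
    using Er_nonempty[OF assms(3)] by simp
  ultimately have "covrad n r Cs \<le> \<rho> \<longleftrightarrow> (\<forall>U\<in>Er n r. Min ((\<lambda>C. dI U C) ` Cs) \<le> \<rho>)"
    unfolding covrad_def by (simp add: Max_le_iff)
  also have "\<dots> \<longleftrightarrow> (\<forall>U\<in>Er n r. \<exists>C\<in>Cs. dI U C \<le> \<rho>)"
    using fin assms(2) by (simp add: Min_le_iff)
  finally show ?thesis .
qed

lemma KC_obtain_cover:
  assumes n: "r \<le> n"
  obtains Cs :: "(nat \<Rightarrow> 'a::{field,finite}) set set"
  where "Cs \<subseteq> Er n r" "Cs \<noteq> {}" "\<forall>U\<in>Er n r. \<exists>C\<in>Cs. dI U C \<le> \<rho>" "card Cs = KC TYPE('a) n r \<rho>"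
proof -
  let ?P = "\<lambda>m. \<exists>Cs::(nat \<Rightarrow> 'a) set set. Cs \<subseteq> Er n r \<and> Cs \<noteq> {} \<and> covrad n r Cs \<le> \<rho> \<and> card Cs = m"
  have "\<forall>U\<in>Er n r. \<exists>C\<in>Er n r. dI U C \<le> \<rho>"
    by (intro ballI bexI) (simp_all add: dI_self)
  then have "covrad n r (Er n r :: (nat \<Rightarrow> 'a) set set) \<le> \<rho>"
    using covrad_le_iff[OF subset_refl Er_nonempty[OF n] n] by blast
  then have "?P (card (Er n r :: (nat \<Rightarrow> 'a) set set))"
    using Er_nonempty[OF n] by blast
  then have "?P (KC TYPE('a) n r \<rho>)"
    unfolding KC_def by (rule LeastI)
  then obtain Cs :: "(nat \<Rightarrow> 'a) set set" where Cs: "Cs \<subseteq> Er n r" "Cs \<noteq> {}" "covrad n r Cs \<le> \<rho>"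
    "card Cs = KC TYPE('a) n r \<rho>"
    by blast
  then have "\<forall>U\<in>Er n r. \<exists>C\<in>Cs. dI U C \<le> \<rho>"
    using covrad_le_iff[OF Cs(1,2) n] by blast
  then show ?thesis
    by (rule that[OF Cs(1,2) _ Cs(4)])
qed

lemma KC_le_card_cover:
  fixes Cs :: "(nat \<Rightarrow> 'a::{field,finite}) set set"
  assumes Cs: "Cs \<subseteq> Er n r" "Cs \<noteq> {}" "\<forall>U\<in>Er n r. \<exists>C\<in>Cs. dI U C \<le> \<rho>" and n: "r \<le> n"
  shows "KC TYPE('a) n r \<rho> \<le> card Cs"
proof -
  have "covrad n r Cs \<le> \<rho>"
    using covrad_le_iff[OF Cs(1,2) n] Cs(3) by blast
  then show ?thesis
    unfolding KC_def using Cs(1,2) by (intro Least_le) blast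
qed

lemma card_Er_le_KC_mult:
  fixes M :: real
  assumes n: "r \<le> n"
    and ball: "\<And>U. U \<in> (Er n r :: (nat \<Rightarrow> 'a::{field,finite}) set set) \<Longrightarrow> real (card (inj_ball n r \<rho> U)) \<le> M"
  shows "real (card (Er n r :: (nat \<Rightarrow> 'a) set set)) \<le> real (KC TYPE('a) n r \<rho>) * M"
proof -
  obtain Cs :: "(nat \<Rightarrow> 'a) set set" where Cs: "Cs \<subseteq> Er n r" "Cs \<noteq> {}" "\<forall>U\<in>Er n r. \<exists>C\<in>Cs. dI U C \<le> \<rho>"
    "card Cs = KC TYPE('a) n r \<rho>"
    by (rule KC_obtain_cover[OF n])
  have fin: "finite Cs"
    using Cs(1) finite_Er finite_subset by blast
  have "Er n r \<subseteq> (\<Union>C\<in>Cs. inj_ball n r \<rho> C)"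
  proof
    fix U assume U: "U \<in> (Er n r :: (nat \<Rightarrow> 'a) set set)"
    then obtain C where C: "C \<in> Cs" "dI U C \<le> \<rho>"
      using Cs(3) by blast
    then have "U \<in> inj_ball n r \<rho> C"
      using U dI_sym[of U C] by (simp add: inj_ball_def)
    then show "U \<in> (\<Union>C\<in>Cs. inj_ball n r \<rho> C)"
      using C(1) by blast
  qed
  then have "card (Er n r :: (nat \<Rightarrow> 'a) set set) \<le> card (\<Union>C\<in>Cs. inj_ball n r \<rho> C)"
    by (rule card_mono[rotated]) (use fin finite_inj_ball in blast)
  also have "\<dots> \<le> (\<Sum>C\<in>Cs. card (inj_ball n r \<rho> C))"
    by (rule card_UN_le[OF fin])
  finally have "real (card (Er n r :: (nat \<Rightarrow> 'a) set set)) \<le> (\<Sum>C\<in>Cs. real (card (inj_ball n r \<rho> C)))"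
    by (simp only: of_nat_sum[symmetric] of_nat_le_iff)
  also have "\<dots> \<le> real (card Cs) * M"
    using sum_bounded_above[of Cs "\<lambda>C. real (card (inj_ball n r \<rho> C))" M] ball Cs(1) by auto
  finally show ?thesis
    using Cs(4) by simp
qed

lemma KC_pos:
  assumes n: "r \<le> n"
  shows "0 < KC TYPE('a::{field,finite}) n r \<rho>"
proof -
  obtain Cs :: "(nat \<Rightarrow> 'a) set set" where Cs: "Cs \<subseteq> Er n r" "Cs \<noteq> {}"
    "\<forall>U\<in>Er n r. \<exists>C\<in>Cs. dI U C \<le> \<rho>" "card Cs = KC TYPE('a) n r \<rho>"
    by (rule KC_obtain_cover[OF n])
  have "finite Cs"
    using Cs(1) finite_Er finite_subset by blast
  then have "0 < card Cs"
    using Cs(2) by (simp add: card_gt_0_iff)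
  then show ?thesis
    using Cs(4) by simp
qed

lemma KC_le_greedy:
  fixes m :: real
  assumes n: "r \<le> n" and m: "0 < m"
    and ball: "\<And>U. U \<in> (Er n r :: (nat \<Rightarrow> 'a::{field,finite}) set set) \<Longrightarrow> m \<le> real (card (inj_ball n r \<rho> U))"
  shows "real (KC TYPE('a) n r \<rho>) \<le>
    real (card (Er n r :: (nat \<Rightarrow> 'a) set set)) / m * (ln (real (card (Er n r :: (nat \<Rightarrow> 'a) set set))) + 1)"
proof -
  have deg: "m \<le> real (card {C \<in> Er n r. dI U C \<le> \<rho>})" if "U \<in> (Er n r :: (nat \<Rightarrow> 'a) set set)" for U
    using ball[OF that] by (simp add: inj_ball_def)
  obtain Cs :: "(nat \<Rightarrow> 'a) set set" where Cs: "Cs \<subseteq> Er n r" "Cs \<noteq> {}" "\<forall>U\<in>Er n r. \<exists>C\<in>Cs. dI U C \<le> \<rho>"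
    "real (card Cs) \<le> real (card (Er n r :: (nat \<Rightarrow> 'a) set set)) / m * (ln (real (card (Er n r :: (nat \<Rightarrow> 'a) set set))) + 1)"
    by (rule greedy_cover[OF finite_Er Er_nonempty[OF n] m deg])
  then show ?thesis
    using KC_le_card_cover[OF Cs(1-3) n] by linarith
qed

lemma log_KC_ge:
  assumes r: "1 \<le> r" and n: "r + \<rho> \<le> n"
  shows "real r * (real n - real r) - real \<rho> * (real n - real \<rho>) - 2 * real r - real \<rho>
    \<le> log (real CARD('a::{field,finite})) (real (KC TYPE('a) n r \<rho>))"
proof -
  let ?q = "real CARD('a)" and ?K = "real (KC TYPE('a) n r \<rho>)"
  let ?e = "real \<rho> * (real n - real \<rho>) + real \<rho> + real r"
  have q: "1 < ?q"
    using card_field_ge_2[where 'a='a] by simp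
  have rn: "r \<le> n"
    using n by simp
  have "real (card (inj_ball n r \<rho> U)) \<le> ?q powr ?e" if "U \<in> Er n r" for U :: "(nat \<Rightarrow> 'a) set"
    using card_inj_ball_le[OF that r n] by simp
  then have "real (card (Er n r :: (nat \<Rightarrow> 'a) set set)) \<le> ?K * ?q powr ?e"
    by (rule card_Er_le_KC_mult[OF rn])
  then have "gauss_binom CARD('a) n r \<le> ?K * ?q powr ?e"
    using card_Er[OF rn, where 'a='a] by simp
  then have "log ?q (gauss_binom CARD('a) n r) \<le> log ?q (?K * ?q powr ?e)"
    using gauss_binom_pos[OF card_field_ge_2 rn] q by (subst log_le_cancel_iff) auto
  also have "\<dots> = log ?q ?K + ?e"
  proof -
    have "0 < KC TYPE('a) n r \<rho>"
      by (rule KC_pos[OF rn])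
    then show ?thesis
      using q by (simp add: log_mult)
  qed
  finally show ?thesis
    using log_gauss_binom_bounds(1)[OF card_field_ge_2[where 'a='a] r rn] by linarith
qed

lemma log_ln_add_one_le:
  fixes q x :: real
  assumes q: "2 \<le> q" and x: "1 \<le> x" "log q x \<le> real n ^ 2"
  shows "log q (ln x + 1) \<le> 2 * real n + 1"
proof -
  have ln_q: "0 < ln q" "ln q \<le> q"
    using q ln_le_minus_one[of q] by auto
  have "ln x = log q x * ln q"
    using ln_q q by (simp add: log_def)
  also have "\<dots> \<le> real n ^ 2 * q"
    using x(2) ln_q q by (intro mult_mono) auto
  finally have "ln x + 1 \<le> (real n ^ 2 + 1) * q"
    using q by (simp add: algebra_simps)
  also have "\<dots> \<le> 4 ^ n * q"
  proof -
    have "real n + 1 \<le> 2 ^ n"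
      using less_exp[of n] by (metis Suc_leI of_nat_Suc of_nat_le_iff of_nat_numeral of_nat_power add.commute)
    then have "(real n + 1) ^ 2 \<le> (2 ^ n) ^ 2"
      by (intro power_mono) auto
    then have "real n ^ 2 + 1 \<le> 4 ^ n"
      by (simp add: power2_eq_square algebra_simps power_mult_distrib[symmetric])
    then show ?thesis
      using q by (intro mult_right_mono) auto
  qed
  also have "\<dots> \<le> q ^ (2 * n) * q"
  proof -
    have "(4::real) \<le> q ^ 2"
      using q mult_mono[of 2 q 2 q] by (simp add: power2_eq_square)
    then have "(4::real) ^ n \<le> (q ^ 2) ^ n"
      by (rule power_mono) simp
    then show ?thesis
      using q by (simp add: power_mult)
  qed
  finally have "ln x + 1 \<le> q ^ (2 * n + 1)"
    by (simp add: mult.commute)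
  moreover have "0 < ln x + 1"
    using x(1) by (smt (verit) ln_ge_zero)
  ultimately have "log q (ln x + 1) \<le> log q (q ^ (2 * n + 1))"
    using q by (subst log_le_cancel_iff) auto
  then show ?thesis
    using q log_nat_power[of q q "2 * n + 1"] by simp
qed

lemma one_le_gauss_binom:
  assumes "r \<le> n"
  shows "1 \<le> gauss_binom CARD('a::{field,finite}) n r"
proof -
  have "0 < card (Er n r :: (nat \<Rightarrow> 'a) set set)"
    by (simp add: card_gt_0_iff finite_Er Er_nonempty[OF assms])
  then show ?thesis
    using card_Er[OF assms, where 'a='a] by linarith
qed

lemma log_ln_gauss_binom_le:
  assumes q: "2 \<le> q" and r: "1 \<le> r" "r \<le> n" and G: "1 \<le> gauss_binom q n r"
  shows "log (real q) (ln (gauss_binom q n r) + 1) \<le> 2 * real n + 1"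
proof -
  have "real n - real r + 1 \<le> real n"
    using r by simp
  then have "real r * (real n - real r + 1) \<le> real n * real n"
    using r by (intro mult_mono) auto
  then have "log (real q) (gauss_binom q n r) \<le> real n ^ 2"
    using log_gauss_binom_bounds(2)[OF q r] by (simp add: power2_eq_square algebra_simps)
  then show ?thesis
    using log_ln_add_one_le[OF _ G] q by simp
qed

lemma log_KC_le:
  assumes r: "1 \<le> r" and \<rho>: "\<rho> \<le> r" and n: "r + \<rho> \<le> n"
  shows "log (real CARD('a::{field,finite})) (real (KC TYPE('a) n r \<rho>))
    \<le> real r * (real n - real r) - real \<rho> * (real n - real \<rho>) + 2 * real r + 2 * real n + 1"
proof -
  let ?q = "real CARD('a)" and ?K = "real (KC TYPE('a) n r \<rho>)"
  let ?G = "gauss_binom CARD('a) n r" and ?e = "real \<rho> * (real n - real \<rho>) - real r"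
  have q: "1 < ?q"
    using card_field_ge_2[where 'a='a] by simp
  have rn: "r \<le> n"
    using n by simp
  have "?q powr ?e \<le> real (card (inj_ball n r \<rho> U))" if "U \<in> Er n r" for U :: "(nat \<Rightarrow> 'a) set"
    using card_inj_ball_ge[OF that r \<rho> n] by simp
  then have "?K \<le> real (card (Er n r :: (nat \<Rightarrow> 'a) set set)) / ?q powr ?e *
      (ln (real (card (Er n r :: (nat \<Rightarrow> 'a) set set))) + 1)"
    using q by (intro KC_le_greedy[OF rn]) auto
  then have K_le: "?K \<le> ?G / ?q powr ?e * (ln ?G + 1)"
    using card_Er[OF rn, where 'a='a] by simp
  have G1: "1 \<le> ?G"
    by (rule one_le_gauss_binom[OF rn])
  have "0 < KC TYPE('a) n r \<rho>"
    by (rule KC_pos[OF rn])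
  moreover have "0 \<le> ln ?G"
    using G1 by simp
  ultimately have pos: "0 < ?K" "0 < ?G" "0 < ln ?G + 1"
    using G1 by linarith+
  have "log ?q ?K \<le> log ?q (?G / ?q powr ?e * (ln ?G + 1))"
    using K_le pos q by (subst log_le_cancel_iff) auto
  also have "\<dots> = log ?q ?G - ?e + log ?q (ln ?G + 1)"
    using pos q by (simp add: log_mult log_divide)
  finally show ?thesis
    using log_gauss_binom_bounds(2)[OF card_field_ge_2[where 'a='a] r rn]
      log_ln_gauss_binom_le[OF card_field_ge_2[where 'a='a] r rn G1] by linarith
qed

lemma log_KC_approx:
  assumes "1 \<le> r" "\<rho> \<le> r" "r + \<rho> \<le> n"
  shows "\<bar>log (real CARD('a::{field,finite})) (real (KC TYPE('a) n r \<rho>)) -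
    (real r * (real n - real r) - real \<rho> * (real n - real \<rho>))\<bar> \<le> 5 * real n"
  using log_KC_ge[OF assms(1,3), where 'a='a] log_KC_le[OF assms, where 'a='a] assms
  by (simp add: abs_le_iff)

lemma log_gauss_binom_approx:
  assumes "2 \<le> q" "1 \<le> r" "r \<le> n"
  shows "\<bar>log (real q) (gauss_binom q n r) - real r * (real n - real r)\<bar> \<le> 5 * real n"
  using log_gauss_binom_bounds[OF assms] assms by (simp add: abs_le_iff)

lemma floor_mult_nat_bounds:
  fixes c :: real
  assumes "0 \<le> c"
  shows "real (nat \<lfloor>c * real n\<rfloor>) \<le> c * real n" "c * real n - 1 < real (nat \<lfloor>c * real n\<rfloor>)"
proof -
  have "real (nat \<lfloor>c * real n\<rfloor>) = real_of_int \<lfloor>c * real n\<rfloor>"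
    using assms by simp
  then show "real (nat \<lfloor>c * real n\<rfloor>) \<le> c * real n" "c * real n - 1 < real (nat \<lfloor>c * real n\<rfloor>)"
    by linarith+
qed

lemma tendsto_floor_mult_div:
  fixes c :: real
  assumes c: "0 \<le> c"
  shows "(\<lambda>n. real (nat \<lfloor>c * real n\<rfloor>) / real n) \<longlonglongrightarrow> c"
proof (rule tendsto_sandwich[where f = "\<lambda>n. c - 1 / real n" and h = "\<lambda>n. c"])
  show "\<forall>\<^sub>F n in sequentially. c - 1 / real n \<le> real (nat \<lfloor>c * real n\<rfloor>) / real n"
    using eventually_gt_at_top[of "0::nat"]
  proof eventually_elim
    case (elim n)
    then have "(c * real n - 1) / real n \<le> real (nat \<lfloor>c * real n\<rfloor>) / real n"
      using floor_mult_nat_bounds(2)[OF c, of n] by (intro divide_right_mono) auto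
    moreover have "(c * real n - 1) / real n = c - 1 / real n"
      using elim by (simp add: field_simps)
    ultimately show ?case
      by simp
  qed
  show "\<forall>\<^sub>F n in sequentially. real (nat \<lfloor>c * real n\<rfloor>) / real n \<le> c"
    using eventually_gt_at_top[of "0::nat"]
  proof eventually_elim
    case (elim n)
    then show ?case
      using floor_mult_nat_bounds(1)[OF c, of n] by (simp add: field_simps)
  qed
  show "(\<lambda>n. c - 1 / real n) \<longlonglongrightarrow> c"
    using tendsto_diff[OF tendsto_const lim_const_over_n, of c 1] by simp
qed simp

lemma tendsto_floor_mult_entropy:
  fixes c :: real
  assumes c: "0 \<le> c"
  shows "(\<lambda>n. real (nat \<lfloor>c * real n\<rfloor>) * (real n - real (nat \<lfloor>c * real n\<rfloor>)) / real n ^ 2)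
    \<longlonglongrightarrow> c * (1 - c)"
proof -
  let ?k = "\<lambda>n. real (nat \<lfloor>c * real n\<rfloor>)"
  have "(\<lambda>n. ?k n / real n * (1 - ?k n / real n)) \<longlonglongrightarrow> c * (1 - c)"
    by (intro tendsto_intros tendsto_floor_mult_div c)
  moreover have "\<forall>\<^sub>F n in sequentially. ?k n / real n * (1 - ?k n / real n) = ?k n * (real n - ?k n) / real n ^ 2"
    using eventually_gt_at_top[of "0::nat"] by eventually_elim (simp add: field_simps power2_eq_square)
  ultimately show ?thesis
    by (rule Lim_transform_eventually)
qed

lemma tendsto_div_square_if_close:
  fixes f g :: "nat \<Rightarrow> real"
  assumes g: "(\<lambda>n. g n / real n ^ 2) \<longlonglongrightarrow> L"
    and close: "\<forall>\<^sub>F n in sequentially. \<bar>f n - g n\<bar> \<le> C * real n"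
  shows "(\<lambda>n. f n / real n ^ 2) \<longlonglongrightarrow> L"
proof -
  have "(\<lambda>n. (f n - g n) / real n ^ 2) \<longlonglongrightarrow> 0"
  proof (rule Lim_null_comparison)
    show "\<forall>\<^sub>F n in sequentially. norm ((f n - g n) / real n ^ 2) \<le> C / real n"
      using close eventually_gt_at_top[of "0::nat"]
    proof eventually_elim
      case (elim n)
      then have "\<bar>f n - g n\<bar> / real n ^ 2 \<le> C * real n / real n ^ 2"
        by (intro divide_right_mono) auto
      moreover have "C * real n / real n ^ 2 = C / real n"
        using elim by (simp add: power2_eq_square)
      ultimately show ?case
        by (simp add: abs_divide)
    qed
    show "(\<lambda>n. C / real n) \<longlonglongrightarrow> 0"
      by (rule lim_const_over_n)
  qed
  from tendsto_add[OF g this] show ?thesis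
    by (simp add: diff_divide_distrib)
qed

lemma eventually_floor_dims:
  fixes r' \<rho>' :: real
  assumes "0 \<le> \<rho>'" "\<rho>' \<le> r'" "r' \<le> 1/2" "0 < r'"
  shows "\<forall>\<^sub>F n in sequentially. 1 \<le> nat \<lfloor>r' * real n\<rfloor> \<and> nat \<lfloor>\<rho>' * real n\<rfloor> \<le> nat \<lfloor>r' * real n\<rfloor> \<and>
    nat \<lfloor>r' * real n\<rfloor> + nat \<lfloor>\<rho>' * real n\<rfloor> \<le> n"
  using eventually_ge_at_top[of "nat \<lceil>2 / r'\<rceil>"]
proof eventually_elim
  case (elim n)
  then have "2 \<le> r' * real n"
    using assms by (simp add: field_simps)
  then have "1 \<le> nat \<lfloor>r' * real n\<rfloor>"
    by linarith
  moreover have "\<rho>' * real n \<le> r' * real n"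
    by (rule mult_right_mono) (use assms in simp_all)
  moreover have "r' * real n \<le> 1 / 2 * real n"
    by (rule mult_right_mono) (use assms in simp_all)
  ultimately have "nat \<lfloor>\<rho>' * real n\<rfloor> \<le> nat \<lfloor>r' * real n\<rfloor>" "nat \<lfloor>r' * real n\<rfloor> + nat \<lfloor>r' * real n\<rfloor> \<le> n"
    by linarith+
  with \<open>1 \<le> nat \<lfloor>r' * real n\<rfloor>\<close> show ?case
    by linarith
qed

lemma tendsto_log_KC_div_square:
  fixes r' \<rho>' :: real
  assumes "0 \<le> \<rho>'" "\<rho>' \<le> r'" "r' \<le> 1/2" "0 < r'"
  shows "(\<lambda>n. log (real CARD('a::{field,finite}))
      (real (KC TYPE('a) n (nat \<lfloor>r' * real n\<rfloor>) (nat \<lfloor>\<rho>' * real n\<rfloor>))) / real n ^ 2)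
    \<longlonglongrightarrow> r' * (1 - r') - \<rho>' * (1 - \<rho>')"
proof -
  define k where "k c n = nat \<lfloor>c * real n\<rfloor>" for c :: real and n
  have "(\<lambda>n. log (real CARD('a)) (real (KC TYPE('a) n (k r' n) (k \<rho>' n))) / real n ^ 2)
      \<longlonglongrightarrow> r' * (1 - r') - \<rho>' * (1 - \<rho>')"
  proof (rule tendsto_div_square_if_close)
    show "(\<lambda>n. (real (k r' n) * (real n - real (k r' n)) - real (k \<rho>' n) * (real n - real (k \<rho>' n))) /
        real n ^ 2) \<longlonglongrightarrow> r' * (1 - r') - \<rho>' * (1 - \<rho>')"
      using tendsto_diff[OF tendsto_floor_mult_entropy tendsto_floor_mult_entropy] assms
      by (simp add: k_def diff_divide_distrib)
    show "\<forall>\<^sub>F n in sequentially. \<bar>log (real CARD('a)) (real (KC TYPE('a) n (k r' n) (k \<rho>' n))) -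
        (real (k r' n) * (real n - real (k r' n)) - real (k \<rho>' n) * (real n - real (k \<rho>' n)))\<bar>
        \<le> 5 * real n"
      using eventually_floor_dims[OF assms] by eventually_elim (simp add: k_def log_KC_approx)
  qed
  then show ?thesis
    by (simp add: k_def)
qed

lemma tendsto_log_gauss_binom_div_square:
  fixes r' :: real
  assumes q: "2 \<le> q" and r': "0 < r'" "r' \<le> 1/2"
  shows "(\<lambda>n. log (real q) (gauss_binom q n (nat \<lfloor>r' * real n\<rfloor>)) / real n ^ 2) \<longlonglongrightarrow> r' * (1 - r')"
proof (rule tendsto_div_square_if_close)
  show "(\<lambda>n. real (nat \<lfloor>r' * real n\<rfloor>) * (real n - real (nat \<lfloor>r' * real n\<rfloor>)) / real n ^ 2)
      \<longlonglongrightarrow> r' * (1 - r')"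
    using tendsto_floor_mult_entropy r' by simp
  show "\<forall>\<^sub>F n in sequentially. \<bar>log (real q) (gauss_binom q n (nat \<lfloor>r' * real n\<rfloor>)) -
      real (nat \<lfloor>r' * real n\<rfloor>) * (real n - real (nat \<lfloor>r' * real n\<rfloor>))\<bar> \<le> 5 * real n"
  proof -
    have "\<forall>\<^sub>F n in sequentially. 1 \<le> nat \<lfloor>r' * real n\<rfloor> \<and> nat \<lfloor>r' * real n\<rfloor> \<le> n"
      using eventually_floor_dims[of 0 r'] r' by simp
    then show ?thesis
      by eventually_elim (simp add: log_gauss_binom_approx q)
  qed
qed

theorem proposition11:
  fixes r' \<rho>' :: real
  assumes "0 \<le> \<rho>'" and "\<rho>' \<le> r'" and "r' \<le> 1/2" and "0 < r'"
  shows "liminf (\<lambda>n. ereal (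
            log (real CARD('a::{field,finite}))
                (real (KC TYPE('a) n (nat \<lfloor>r' * real n\<rfloor>) (nat \<lfloor>\<rho>' * real n\<rfloor>)))
            / log (real CARD('a))
                (gauss_binom CARD('a) n (nat \<lfloor>r' * real n\<rfloor>))))
         = ereal (1 - (\<rho>' * (1 - \<rho>')) / (r' * (1 - r')))"
proof -
  define LK where
    "LK n = log (real CARD('a)) (real (KC TYPE('a) n (nat \<lfloor>r' * real n\<rfloor>) (nat \<lfloor>\<rho>' * real n\<rfloor>)))" for n
  define LG where "LG n = log (real CARD('a)) (gauss_binom CARD('a) n (nat \<lfloor>r' * real n\<rfloor>))" for n
  have "(\<lambda>n. (LK n / real n ^ 2) / (LG n / real n ^ 2)) \<longlonglongrightarrow>
      (r' * (1 - r') - \<rho>' * (1 - \<rho>')) / (r' * (1 - r'))"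
    using tendsto_log_KC_div_square[OF assms, where 'a='a]
      tendsto_log_gauss_binom_div_square[OF card_field_ge_2[where 'a='a], of r'] assms
    by (intro tendsto_divide) (auto simp: LK_def LG_def)
  moreover have "\<forall>\<^sub>F n in sequentially. (LK n / real n ^ 2) / (LG n / real n ^ 2) = LK n / LG n"
    using eventually_gt_at_top[of "0::nat"] by eventually_elim simp
  ultimately have "(\<lambda>n. LK n / LG n) \<longlonglongrightarrow> (r' * (1 - r') - \<rho>' * (1 - \<rho>')) / (r' * (1 - r'))"
    by (rule Lim_transform_eventually)
  moreover have "(r' * (1 - r') - \<rho>' * (1 - \<rho>')) / (r' * (1 - r')) = 1 - (\<rho>' * (1 - \<rho>')) / (r' * (1 - r'))"
    using assms by (simp add: diff_divide_distrib)
  ultimately have "(\<lambda>n. ereal (LK n / LG n)) \<longlonglongrightarrow> ereal (1 - (\<rho>' * (1 - \<rho>')) / (r' * (1 - r')))"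
    by (intro tendsto_ereal) simp
  then show ?thesis
    by (simp add: lim_imp_Liminf LK_def LG_def)
qed

end
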